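(* Let $f$ be a toric profile function as in the context, homogeneous of degree $1$, with strictly convex level set $N=f^{-1}(1)$, and let $\hbar>0$. For $m\in\mathbb{N}_0^n$ set $$E_m:=\sup_{(k,a)\in\mathcal{A}}\frac{\hbar\langle m,k\rangle}{a}=\sup_{k\in\mathbb{N}_0^n}\frac{\hbar\langle m,k\rangle}{a(k)} .$$ Then the EBK spectrum $\{f(\hbar m)\mid m\in\mathbb{N}_0^n\}$ of the associated Hamiltonian consists of the values $E_m$; precisely, $f(\hbar m)=E_m$ for every $m\in\mathbb{N}_0^n$. Moreover, $E_m$ is the unique real number such that for all $E\in\mathbb{R}$ $$\sup_{\ell\in\mathbb{N}}\ \inf_{k\in\mathbb{N}_\ell^n}\Bigl(E\,a(k)-\hbar\langle m,k\rangle\Bigr)=\begin{cases}+\infty&\text{if }E>E_m,\\-\infty&\text{if }E<E_m.\end{cases}$$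
   Context: Setting: $f:\mathbb{R}_{\ge0}^n\to[0,\infty)$ is continuous, smooth and positive on $\mathbb{R}_{\ge0}^n\setminus\{0\}$ (smooth up to the boundary faces), with $f(tp)=tf(p)$ for $t>0$. $N:=f^{-1}(1)$ is regular, with outward unit normal $n(p)=\nabla f(p)/|\nabla f(p)|$, assumed to satisfy $n(p)\in[0,\infty)^n$ for all $p\in N$. $N$ is strictly convex: $\{p\in\mathbb{R}^n_{\ge0}:f(p)\le1\}$ is convex and $N$ has everywhere positive normal curvatures. The marked action spectrum is $\mathcal{A}:=\{(k,\langle p,k\rangle)\mid k\in\mathbb{Z}^n\setminus\{0\},\ p\in N,\ n(p)=\lambda k\text{ for some }\lambda>0\}$. For $\ell\in\mathbb{N}_0$, $\mathbb{N}_\ell^n:=\{k\in\mathbb{Z}^n\mid k_j\ge\ell\text{ for all }j,\ \text{and }n(p)=\lambda k\text{ for some }p\in N,\lambda>0\}$; the supremum over $k\in\mathbb{N}_0^n$ in the definition of $E_m$ ranges over $k\in\mathbb{N}_0^n$ (excluding $0$). For such $k$, $a(k):=\langle p,k\rangle$ where $p\in N$ is the unique point with $n(p)$ positively proportional to $k$. *)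

theory Defs
  imports "HOL-Analysis.Analysis"
begin

definition orth :: "(real^'n) set" where
  "orth = {x. \<forall>i. 0 \<le> x $ i}"

text \<open>C-infinity functions on an open set: all partial derivatives of all orders exist
  and are continuous (coinductive characterisation).\<close>
coinductive smooth_on :: "(real^'n) set \<Rightarrow> (real^'n \<Rightarrow> real) \<Rightarrow> bool" where
  "\<lbrakk> continuous_on U F; \<forall>x\<in>U. F differentiable (at x);
     \<forall>i. smooth_on U (\<lambda>x. frechet_derivative F (at x) (axis i 1)) \<rbrakk> \<Longrightarrow> smooth_on U F"

definition gradF :: "(real^'n \<Rightarrow> real) \<Rightarrow> real^'n \<Rightarrow> real^'n" where
  "gradF F p = (\<chi> i. frechet_derivative F (at p) (axis i 1))"

definition hessF :: "(real^'n \<Rightarrow> real) \<Rightarrow> real^'n \<Rightarrow> real^'n \<Rightarrow> real^'n" where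
  "hessF F p v = (\<chi> i. frechet_derivative (\<lambda>x. frechet_derivative F (at x) (axis i 1)) (at p) v)"

definition levelN :: "(real^'n \<Rightarrow> real) \<Rightarrow> (real^'n) set" where
  "levelN f = {p \<in> orth. f p = 1}"

text \<open>g is the gradient of f at p (derivative taken within the orthant, so boundary
  points are covered).\<close>
definition is_grad :: "(real^'n \<Rightarrow> real) \<Rightarrow> real^'n \<Rightarrow> real^'n \<Rightarrow> bool" where
  "is_grad f p g \<longleftrightarrow> (f has_derivative (\<lambda>v. g \<bullet> v)) (at p within orth)"

definition normal_prop :: "(real^'n \<Rightarrow> real) \<Rightarrow> real^'n \<Rightarrow> real^'n \<Rightarrow> bool" where
  "normal_prop f p k \<longleftrightarrow>
     (\<exists>g c. is_grad f p g \<and> g \<noteq> 0 \<and> c > 0 \<and> g /\<^sub>R norm g = c *\<^sub>R k)"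

definition ivec :: "int^'n \<Rightarrow> real^'n" where
  "ivec k = (\<chi> i. real_of_int (k $ i))"

definition nvec :: "nat^'n \<Rightarrow> real^'n" where
  "nvec m = (\<chi> i. real (m $ i))"

definition action_spectrum :: "(real^'n \<Rightarrow> real) \<Rightarrow> ((int^'n) \<times> real) set" where
  "action_spectrum f = {(k, p \<bullet> ivec k) | k p. k \<noteq> 0 \<and> p \<in> levelN f \<and> normal_prop f p (ivec k)}"

definition Nset :: "(real^'n \<Rightarrow> real) \<Rightarrow> int \<Rightarrow> (int^'n) set" where
  "Nset f l = {k. (\<forall>j. l \<le> k $ j) \<and> (\<exists>p\<in>levelN f. normal_prop f p (ivec k))}"

definition act :: "(real^'n \<Rightarrow> real) \<Rightarrow> int^'n \<Rightarrow> real" where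
  "act f k = (THE p. p \<in> levelN f \<and> normal_prop f p (ivec k)) \<bullet> ivec k"

definition Em :: "(real^'n \<Rightarrow> real) \<Rightarrow> real \<Rightarrow> nat^'n \<Rightarrow> ereal" where
  "Em f hb m = (SUP ka\<in>action_spectrum f. ereal (hb * (nvec m \<bullet> ivec (fst ka)) / snd ka))"

end

theory Submission
  imports Defs
begin

(*
  A direction k normal to N at p makes p the maximizer of the linear functional <k, .> on the
  convex body K = {f <= 1}; by homogeneity <y, k> <= f(y) a(k) for every y in the orthant.
  Hence E_m <= f(hbar m), and since a(k) grows linearly in min_j k_j the infimum over
  N_l^n tends to +infinity for E > f(hbar m).  Conversely, strict convexity makes maximizers
  unique, so a direction close to the gradient g at an interior point of N near y / f(y)
  is the normal at a nearby point of N.  Rational such directions give lattice vectors k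
  with <y, k> / a(k) > f(y) - eps, so E_m = f(hbar m), and the multiples t k of one of them
  drive the infimum to -infinity for E < f(hbar m).
*)

section \<open>The nonnegative orthant and lattice directions\<close>

lemma closed_orth: "closed (orth :: (real^'n) set)"
proof -
  have "orth = (\<Inter>i. {x::real^'n. 0 \<le> x $ i})" by (auto simp: orth_def)
  moreover have "closed {x::real^'n. 0 \<le> x $ i}" for i
    by (intro closed_Collect_le continuous_intros)
  ultimately show ?thesis by (metis closed_INT)
qed

lemma orth_scaleR: "p \<in> orth \<Longrightarrow> 0 \<le> t \<Longrightarrow> t *\<^sub>R p \<in> orth"
  by (auto simp: orth_def)

lemma axis_in_orth: "axis i (1::real) \<in> orth"
  by (auto simp: orth_def axis_def)

lemma nvec_in_orth: "nvec m \<in> orth"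
  by (simp add: nvec_def orth_def)

lemma ivec_in_orth_iff: "ivec k \<in> orth \<longleftrightarrow> (\<forall>j. 0 \<le> k $ j)"
  by (simp add: ivec_def orth_def)

lemma open_positive_orthant: "open {x::real^'n. \<forall>i. 0 < x $ i}"
proof -
  have "{x::real^'n. \<forall>i. 0 < x $ i} = (\<Inter>i\<in>UNIV. {x. 0 < x $ i})" by auto
  moreover have "open {x::real^'n. 0 < x $ i}" for i
    by (intro open_Collect_less continuous_intros)
  ultimately show ?thesis by auto
qed

lemma positive_orthant_subset_orth: "{x::real^'n. \<forall>i. 0 < x $ i} \<subseteq> orth"
  by (auto simp: orth_def less_imp_le)

lemma inner_pos_of_positive_coords:
  fixes x y :: "real^'n"
  assumes "\<forall>i. 0 < x $ i" "\<forall>i. 0 < y $ i"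
  shows "0 < x \<bullet> y"
  using assms by (auto simp: inner_vec_def intro!: sum_pos)

lemma Nset_antimono: "l \<le> l' \<Longrightarrow> Nset f l' \<subseteq> Nset f l"
  by (auto simp: Nset_def intro: order_trans)

lemma exists_integer_direction_near:
  fixes g :: "real^'n"
  assumes g: "g \<in> orth" and \<delta>: "\<delta> > 0"
  shows "\<exists>j::nat. \<exists>k. 0 < j \<and> (\<forall>i. 1 \<le> k $ i) \<and> dist ((1 / real j) *\<^sub>R ivec k) g < \<delta>"
proof -
  define n where "n = real CARD('n)"
  have n: "n \<ge> 1" by (simp add: n_def Suc_le_eq)
  obtain j :: nat where j: "2 * n / \<delta> < real j" using reals_Archimedean2 by blast
  have jpos: "0 < real j" using j n \<delta> by (smt (verit) divide_pos_pos)
  define k where "k = (\<chi> i. \<lceil>real j * g $ i\<rceil> + 1)"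
  have k1: "1 \<le> k $ i" for i
  proof -
    have "0 \<le> real j * g $ i" using g jpos by (simp add: orth_def)
    thus ?thesis by (simp add: k_def)
  qed
  have coord: "\<bar>((1 / real j) *\<^sub>R ivec k - g) $ i\<bar> \<le> 2 / real j" for i
  proof -
    have c: "real j * g $ i \<le> real_of_int \<lceil>real j * g $ i\<rceil>"
      "real_of_int \<lceil>real j * g $ i\<rceil> < real j * g $ i + 1"
      by linarith+
    have "((1 / real j) *\<^sub>R ivec k - g) $ i = (real_of_int \<lceil>real j * g $ i\<rceil> + 1 - real j * g $ i) / real j"
      using jpos by (simp add: ivec_def k_def field_simps)
    moreover have "\<bar>real_of_int \<lceil>real j * g $ i\<rceil> + 1 - real j * g $ i\<bar> \<le> 2"
      using c by linarith
    ultimately show ?thesis using jpos by (simp add: divide_right_mono)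
  qed
  have "dist ((1 / real j) *\<^sub>R ivec k) g \<le> (\<Sum>i\<in>UNIV. \<bar>((1 / real j) *\<^sub>R ivec k - g) $ i\<bar>)"
    unfolding dist_norm by (rule norm_le_l1_cart)
  also have "\<dots> \<le> (\<Sum>i\<in>(UNIV::'n set). 2 / real j)" by (intro sum_mono coord)
  also have "\<dots> = 2 * n / real j" by (simp add: n_def)
  also have "\<dots> < \<delta>" using j jpos \<delta> by (simp add: divide_less_eq mult.commute)
  finally show ?thesis using jpos k1 by (intro exI[of _ j] exI[of _ k]) auto
qed

section \<open>Calculus along lines\<close>

lemma has_field_derivative_along_line:
  fixes G :: "'a::real_normed_vector \<Rightarrow> real"
  assumes "(G has_derivative D) (at (x0 + t *\<^sub>R v))"
  shows "((\<lambda>s. G (x0 + s *\<^sub>R v)) has_field_derivative D v) (at t)"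
proof -
  have l: "linear D" using has_derivative_linear[OF assms] .
  have "((\<lambda>s. x0 + s *\<^sub>R v) has_derivative (\<lambda>s. s *\<^sub>R v)) (at t)"
    by (auto intro!: derivative_eq_intros)
  from has_derivative_compose[OF this assms]
  have "((\<lambda>s. G (x0 + s *\<^sub>R v)) has_derivative (\<lambda>s. D (s *\<^sub>R v))) (at t)" .
  thus ?thesis unfolding has_field_derivative_def
    by (rule has_derivative_eq_rhs) (auto simp: fun_eq_iff linear_scale[OF l])
qed

lemma linear_eq_sum_axis:
  fixes D :: "real^'n \<Rightarrow> real"
  assumes "linear D"
  shows "D v = (\<Sum>i\<in>UNIV. v $ i * D (axis i 1))"
proof -
  have "D v = D (\<Sum>i\<in>UNIV. v $ i *\<^sub>R axis i 1)"
    using basis_expansion[of v] by (simp add: scalar_mult_eq_scaleR)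
  also have "\<dots> = (\<Sum>i\<in>UNIV. v $ i * D (axis i 1))"
    by (simp add: linear_sum[OF assms] linear_scale[OF assms])
  finally show ?thesis .
qed

lemma has_field_derivative_along_line_partials:
  fixes F :: "real^'n \<Rightarrow> real"
  assumes "F differentiable (at (p + t *\<^sub>R v))"
  shows "((\<lambda>s. F (p + s *\<^sub>R v)) has_field_derivative
           (\<Sum>i\<in>UNIV. v $ i * frechet_derivative F (at (p + t *\<^sub>R v)) (axis i 1))) (at t)"
proof -
  have hd: "(F has_derivative frechet_derivative F (at (p + t *\<^sub>R v))) (at (p + t *\<^sub>R v))"
    using assms by (rule frechet_derivative_works[THEN iffD1])
  show ?thesis
    using has_field_derivative_along_line[OF hd] linear_eq_sum_axis[OF has_derivative_linear[OF hd], of v]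
    by (simp only:)
qed

lemma has_field_derivative_eventually_zero_right:
  fixes g :: "real \<Rightarrow> real"
  assumes dg: "(g has_field_derivative D) (at x)" and ev: "eventually (\<lambda>t. g t = 0) (at_right x)"
  shows "g x = 0" "D = 0"
proof -
  have "(g \<longlongrightarrow> g x) (at_right x)"
    using DERIV_isCont[OF dg] by (simp add: isCont_def filterlim_at_split)
  moreover have "(g \<longlongrightarrow> 0) (at_right x)"
    by (rule Lim_transform_eventually[OF tendsto_const]) (use ev in \<open>auto elim: eventually_mono\<close>)
  ultimately show gx: "g x = 0" using tendsto_unique trivial_limit_at_right_real by blast
  have "((\<lambda>y. (g y - g x) / (y - x)) \<longlongrightarrow> D) (at_right x)"
    using has_field_derivative_at_within[OF dg, of "{x<..}"] unfolding has_field_derivative_iff .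
  moreover have "((\<lambda>y. (g y - g x) / (y - x)) \<longlongrightarrow> 0) (at_right x)"
    by (rule Lim_transform_eventually[OF tendsto_const]) (use ev gx in \<open>auto elim: eventually_mono\<close>)
  ultimately show "D = 0" using tendsto_unique trivial_limit_at_right_real by blast
qed

lemma field_derivative_nonpos_at_left_max:
  fixes \<phi> :: "real \<Rightarrow> real"
  assumes d: "(\<phi> has_field_derivative D) (at 0 within {0..1})"
    and mx: "\<And>t. t \<in> {0..1} \<Longrightarrow> \<phi> t \<le> \<phi> 0"
  shows "D \<le> 0"
proof -
  have "((\<lambda>t. (\<phi> t - \<phi> 0) / (t - 0)) \<longlongrightarrow> D) (at_right 0)"
    using d at_within_Icc_at_right[of "0::real" 1] unfolding has_field_derivative_iff by simp
  moreover have "eventually (\<lambda>t. (\<phi> t - \<phi> 0) / (t - 0) \<le> 0) (at_right 0)"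
    unfolding eventually_at_right[of "0::real" 1, simplified]
    by (intro exI[of _ 1]) (auto intro!: divide_nonpos_pos simp: mx)
  ultimately show ?thesis by (rule tendsto_upperbound) simp
qed

lemma nonneg_multiple_if_descent_nonpos:
  fixes g \<nu> :: "'a::real_inner"
  assumes g: "g \<noteq> 0" and descent: "\<And>w. g \<bullet> w < 0 \<Longrightarrow> \<nu> \<bullet> w \<le> 0"
  shows "\<exists>c\<ge>0. \<nu> = c *\<^sub>R g"
proof -
  define c where "c = (\<nu> \<bullet> g) / (g \<bullet> g)"
  define w0 where "w0 = \<nu> - c *\<^sub>R g"
  have gg: "g \<bullet> g > 0" using g by simp
  have gw0: "g \<bullet> w0 = 0" using gg by (simp add: w0_def c_def inner_diff_right inner_commute)
  have c: "c \<ge> 0"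
    using descent[of "- g"] gg by (simp add: c_def)
  have "w0 = 0"
  proof (rule ccontr)
    assume "w0 \<noteq> 0"
    define A where "A = w0 \<bullet> w0"
    define B where "B = c * (g \<bullet> g)"
    have A: "A > 0" using \<open>w0 \<noteq> 0\<close> by (simp add: A_def)
    have B: "B \<ge> 0" using c gg by (simp add: B_def)
    define s where "s = A / (2 * B + 2)"
    have s: "s > 0" using A B by (simp add: s_def)
    have "\<nu> \<bullet> (w0 - s *\<^sub>R g) \<le> 0"
      using gw0 s gg by (intro descent) (simp add: inner_diff_right)
    hence "A - s * B \<le> 0" using gw0
      by (simp add: w0_def A_def B_def inner_add_left inner_diff_right inner_diff_left inner_commute algebra_simps)
    moreover have "s * B < A"
    proof -
      have "s * B = A * (B / (2 * B + 2))" by (simp add: s_def)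
      also have "\<dots> < A * 1" using A B by (intro mult_strict_left_mono) auto
      finally show ?thesis by simp
    qed
    ultimately show False by simp
  qed
  thus ?thesis using c by (auto simp: w0_def)
qed

lemma smooth_on_differentiable:
  assumes "smooth_on U F" "x \<in> U"
  shows "F differentiable (at x)"
    and "(\<lambda>y. frechet_derivative F (at y) (axis i 1)) differentiable (at x)"
proof -
  from assms(1) have "\<forall>x\<in>U. F differentiable (at x)"
    and "smooth_on U (\<lambda>y. frechet_derivative F (at y) (axis i 1))"
    by (cases rule: smooth_on.cases, auto)+
  thus "F differentiable (at x)"
    and "(\<lambda>y. frechet_derivative F (at y) (axis i 1)) differentiable (at x)"
    using assms(2) by (auto elim: smooth_on.cases)
qed

lemma smooth_on_const_on_segment:
  fixes F :: "real^'n \<Rightarrow> real"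
  assumes sm: "smooth_on U F" and U: "open U" "p \<in> U"
    and const: "\<And>t. t \<in> {0..1} \<Longrightarrow> F (p + t *\<^sub>R v) = F p"
  shows "gradF F p \<bullet> v = 0" "v \<bullet> hessF F p v = 0"
proof -
  define dF where "dF = (\<lambda>i x. frechet_derivative F (at x) (axis i (1::real)))"
  have "open ((\<lambda>t::real. p + t *\<^sub>R v) -` U)"
    by (rule open_vimage[OF U(1)]) (intro continuous_intros)
  moreover have "0 \<in> (\<lambda>t::real. p + t *\<^sub>R v) -` U" using U(2) by simp
  ultimately obtain \<delta> where \<delta>: "\<delta> > 0" "ball 0 \<delta> \<subseteq> (\<lambda>t::real. p + t *\<^sub>R v) -` U"
    by (rule openE)
  \<comment> \<open>\<open>ch\<close> is the derivative of \<open>F\<close> along the line; constancy on the segment makes both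
      \<open>ch 0 = gradF F p \<bullet> v\<close> and \<open>ch' 0 = v \<bullet> hessF F p v\<close> vanish.\<close>
  define ch where "ch = (\<lambda>t. \<Sum>i\<in>UNIV. v $ i * dF i (p + t *\<^sub>R v))"
  have dline: "((\<lambda>s. F (p + s *\<^sub>R v)) has_field_derivative ch t) (at t)" if "\<bar>t\<bar> < \<delta>" for t
    unfolding ch_def dF_def using \<delta>(2) that
    by (intro has_field_derivative_along_line_partials smooth_on_differentiable[OF sm]) auto
  have "eventually (\<lambda>t. ch t = 0) (at_right 0)"
    unfolding eventually_at_right[of "0::real" 1, simplified]
  proof (intro exI[of _ "min \<delta> 1"] conjI allI impI)
    fix t :: real assume t: "0 < t" "t < min \<delta> 1"
    have "((\<lambda>s. F (p + s *\<^sub>R v)) has_field_derivative 0) (at t)"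
      by (rule has_field_derivative_transform_within_open[OF DERIV_const[of "F p"] _ _, of "{0<..<min \<delta> 1}"])
         (use t in \<open>auto intro!: const[symmetric]\<close>)
    thus "ch t = 0" using dline[of t] t DERIV_unique by force
  qed (use \<delta> in auto)
  moreover define H where "H = (\<Sum>i\<in>UNIV. v $ i * frechet_derivative (dF i) (at p) v)"
  have "(ch has_field_derivative H) (at 0)"
    unfolding ch_def H_def
  proof (intro DERIV_sum DERIV_cmult)
    fix i
    have "(dF i has_derivative frechet_derivative (dF i) (at (p + 0 *\<^sub>R v))) (at (p + 0 *\<^sub>R v))"
      unfolding dF_def using smooth_on_differentiable(2)[OF sm U(2)]
      by (intro frechet_derivative_works[THEN iffD1]) simp
    thus "((\<lambda>t. dF i (p + t *\<^sub>R v)) has_field_derivative frechet_derivative (dF i) (at p) v) (at 0)"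
      using has_field_derivative_along_line by fastforce
  qed
  ultimately have "ch 0 = 0" "H = 0"
    using has_field_derivative_eventually_zero_right by blast+
  moreover have "gradF F p \<bullet> v = ch 0"
    by (simp add: gradF_def ch_def dF_def inner_vec_def mult.commute)
  moreover have "v \<bullet> hessF F p v = H"
    by (simp add: hessF_def H_def dF_def inner_vec_def)
  ultimately show "gradF F p \<bullet> v = 0" "v \<bullet> hessF F p v = 0" by simp_all
qed

section \<open>The convex body bounded by \<open>N\<close> and its normals\<close>

locale toric =
  fixes f :: "real^'n \<Rightarrow> real"
  assumes cont: "continuous_on orth f"
    and nonneg: "\<forall>p\<in>orth. 0 \<le> f p"
    and pos: "\<forall>p\<in>orth - {0}. 0 < f p"
    and homog: "\<forall>p\<in>orth. \<forall>t>0. f (t *\<^sub>R p) = t * f p"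
    and smooth: "\<exists>U F. open U \<and> orth - {0} \<subseteq> U \<and> smooth_on U F \<and>
                   (\<forall>x\<in>orth - {0}. F x = f x) \<and>
                   (\<forall>p\<in>levelN f. \<forall>v. v \<noteq> 0 \<and> gradF F p \<bullet> v = 0 \<longrightarrow> 0 < v \<bullet> hessF F p v)"
    and regular: "\<forall>p\<in>levelN f. \<exists>g. is_grad f p g \<and> g \<noteq> 0"
    and normal_nonneg: "\<forall>p\<in>levelN f. \<forall>g. is_grad f p g \<longrightarrow> g /\<^sub>R norm g \<in> orth"
    and convex: "convex {p\<in>orth. f p \<le> 1}"
begin

definition K :: "(real^'n) set" where
  "K = {p\<in>orth. f p \<le> 1}"

definition maximizes :: "real^'n \<Rightarrow> real^'n \<Rightarrow> bool" where
  "maximizes \<nu> p \<longleftrightarrow> p \<in> K \<and> (\<forall>x\<in>K. \<nu> \<bullet> x \<le> \<nu> \<bullet> p)"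

lemma f_zero: "f 0 = 0"
proof -
  have "(0::real^'n) \<in> orth" by (simp add: orth_def)
  hence "f ((2::real) *\<^sub>R 0) = 2 * f 0" using homog by (metis zero_less_numeral)
  thus ?thesis by simp
qed

lemma levelN_nonzero: "p \<in> levelN f \<Longrightarrow> p \<noteq> 0"
  using f_zero by (auto simp: levelN_def)

lemma levelN_subset_K: "levelN f \<subseteq> K"
  by (auto simp: levelN_def K_def)

lemma K_segment:
  assumes "p \<in> K" "q \<in> K" "t \<in> {0..1}"
  shows "p + t *\<^sub>R (q - p) \<in> K"
proof -
  have "p + t *\<^sub>R (q - p) = (1 - t) *\<^sub>R p + t *\<^sub>R q" by (simp add: algebra_simps)
  thus ?thesis using convex[unfolded convex_def] assms by (auto simp: K_def)
qed

lemma scaled_in_levelN: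
  assumes "x \<in> orth" "x \<noteq> 0"
  shows "(1 / f x) *\<^sub>R x \<in> levelN f"
proof -
  have fx: "f x > 0" using pos assms by auto
  have "f ((1 / f x) *\<^sub>R x) = (1 / f x) * f x" using homog assms fx by auto
  thus ?thesis using fx assms by (auto simp: levelN_def intro!: orth_scaleR)
qed

lemma scaled_in_K: "x \<in> orth \<Longrightarrow> x \<noteq> 0 \<Longrightarrow> (1 / f x) *\<^sub>R x \<in> K"
  using scaled_in_levelN levelN_subset_K by blast

lemma compact_K: "compact K"
proof -
  define S where "S = sphere (0::real^'n) 1 \<inter> orth"
  have cS: "compact S" unfolding S_def by (intro compact_Int_closed closed_orth) auto
  have "axis undefined 1 \<in> S" using axis_in_orth by (simp add: S_def)
  hence neS: "S \<noteq> {}" by auto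
  have "continuous_on S f" using cont by (rule continuous_on_subset) (auto simp: S_def)
  then obtain y where yS: "y \<in> S" and ymin: "\<forall>x\<in>S. f y \<le> f x"
    using continuous_attains_inf[OF cS neS] by blast
  have fy: "f y > 0" using pos yS by (auto simp: S_def)
  have "norm x \<le> 1 / f y" if xK: "x \<in> K" for x
  proof (cases "x = 0")
    case True thus ?thesis using fy by simp
  next
    case False
    have xo: "x \<in> orth" using xK by (simp add: K_def)
    have "(1 / norm x) *\<^sub>R x \<in> S" using False xo by (auto simp: S_def intro!: orth_scaleR)
    hence "f y \<le> f ((1 / norm x) *\<^sub>R x)" using ymin by blast
    also have "\<dots> = f x / norm x" using homog xo False by auto
    finally have "f y * norm x \<le> f x" using False by (simp add: field_simps)
    also have "\<dots> \<le> 1" using xK by (simp add: K_def)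
    finally show ?thesis using fy by (simp add: field_simps mult.commute)
  qed
  hence "bounded K" by (auto simp: bounded_iff)
  moreover have "closed K"
    unfolding K_def by (intro continuous_on_closed_Collect_le cont continuous_intros closed_orth)
  ultimately show ?thesis by (simp add: compact_eq_bounded_closed)
qed

lemma euler_identity:
  assumes p: "p \<in> orth" and g: "is_grad f p g"
  shows "g \<bullet> p = f p"
proof -
  have d1: "((\<lambda>t::real. t *\<^sub>R p) has_derivative (\<lambda>t. t *\<^sub>R p)) (at 1 within {0<..})"
    by (auto intro!: derivative_eq_intros)
  have sub: "(\<lambda>t::real. t *\<^sub>R p) ` {0<..} \<subseteq> orth" using p by (auto intro!: orth_scaleR)
  have "(f has_derivative (\<lambda>v. g \<bullet> v)) (at ((\<lambda>t::real. t *\<^sub>R p) 1) within (\<lambda>t::real. t *\<^sub>R p) ` {0<..})"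
    using g unfolding is_grad_def by (auto intro: has_derivative_subset[OF _ sub])
  from diff_chain_within[OF d1 this]
  have "(f \<circ> (\<lambda>t::real. t *\<^sub>R p) has_derivative (\<lambda>v. g \<bullet> v) \<circ> (\<lambda>t. t *\<^sub>R p)) (at 1)"
    using at_within_open[of "1::real" "{0<..}"] by simp
  hence "((\<lambda>t. t * f p) has_derivative (\<lambda>v. g \<bullet> v) \<circ> (\<lambda>t. t *\<^sub>R p)) (at 1)"
    by (rule has_derivative_transform_within_open[of _ _ _ _ "{0<..}"]) (use homog p in auto)
  moreover have "((\<lambda>t. t * f p) has_derivative (\<lambda>t. t * f p)) (at 1)"
    by (auto intro!: derivative_eq_intros)
  ultimately have "(\<lambda>v. g \<bullet> v) \<circ> (\<lambda>t. t *\<^sub>R p) = (\<lambda>t. t * f p)"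
    by (rule has_derivative_unique)
  from fun_cong[OF this, of 1] show ?thesis by simp
qed

lemma grad_inner_levelN: "p \<in> levelN f \<Longrightarrow> is_grad f p g \<Longrightarrow> g \<bullet> p = 1"
  using euler_identity by (auto simp: levelN_def)

lemma grad_support:
  assumes p: "p \<in> levelN f" and g: "is_grad f p g" and x: "x \<in> K"
  shows "g \<bullet> x \<le> 1"
proof -
  define \<gamma> where "\<gamma> = (\<lambda>t::real. p + t *\<^sub>R (x - p))"
  have \<gamma>K: "\<gamma> ` {0..1} \<subseteq> K" using K_segment levelN_subset_K p x by (auto simp: \<gamma>_def)
  have "(\<gamma> has_derivative (\<lambda>t. t *\<^sub>R (x - p))) (at 0 within {0..1})"
    unfolding \<gamma>_def by (auto intro!: derivative_eq_intros)
  moreover have "(f has_derivative (\<lambda>w. g \<bullet> w)) (at (\<gamma> 0) within \<gamma> ` {0..1})"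
    using g \<gamma>K unfolding is_grad_def \<gamma>_def K_def by (auto intro: has_derivative_subset)
  ultimately have "(f \<circ> \<gamma> has_derivative (\<lambda>w. g \<bullet> w) \<circ> (\<lambda>t. t *\<^sub>R (x - p))) (at 0 within {0..1})"
    by (rule diff_chain_within)
  hence "((f \<circ> \<gamma>) has_field_derivative (g \<bullet> (x - p))) (at 0 within {0..1})"
    unfolding has_field_derivative_def by (rule has_derivative_eq_rhs) (auto simp: fun_eq_iff)
  moreover have "(f \<circ> \<gamma>) t \<le> (f \<circ> \<gamma>) 0" if "t \<in> {0..1}" for t
  proof -
    have "\<gamma> t \<in> K" using \<gamma>K that by blast
    thus ?thesis using p by (simp add: K_def levelN_def \<gamma>_def)
  qed
  ultimately have "g \<bullet> (x - p) \<le> 0" by (rule field_derivative_nonpos_at_left_max)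
  thus ?thesis using grad_inner_levelN[OF p g] by (simp add: inner_diff_right)
qed

lemma levelN_no_segment:
  assumes p: "p \<in> levelN f" and q: "q \<in> levelN f"
    and seg: "\<And>t. t \<in> {0..1} \<Longrightarrow> f (p + t *\<^sub>R (q - p)) = 1"
  shows "p = q"
proof -
  obtain U F where U: "open U" "orth - {0} \<subseteq> U" and sm: "smooth_on U F"
    and Ff: "\<forall>x\<in>orth - {0}. F x = f x"
    and hess: "\<forall>p\<in>levelN f. \<forall>v. v \<noteq> 0 \<and> gradF F p \<bullet> v = 0 \<longrightarrow> 0 < v \<bullet> hessF F p v"
    using smooth by blast
  have "F (p + t *\<^sub>R (q - p)) = 1" if t: "t \<in> {0..1}" for t
  proof -
    have "p + t *\<^sub>R (q - p) \<in> orth"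
      using K_segment[OF _ _ t] levelN_subset_K p q by (auto simp: K_def)
    moreover have "p + t *\<^sub>R (q - p) \<noteq> 0" using seg[OF t] f_zero by auto
    ultimately show ?thesis using Ff seg[OF t] by auto
  qed
  moreover have "F p = 1" using calculation[of 0] by simp
  moreover have "p \<in> U" using U p levelN_nonzero[OF p] by (auto simp: levelN_def)
  ultimately have "gradF F p \<bullet> (q - p) = 0" "(q - p) \<bullet> hessF F p (q - p) = 0"
    using smooth_on_const_on_segment[OF sm U(1)] by auto
  thus ?thesis using hess p by (metis less_irrefl right_minus_eq)
qed

lemma grad_in_orth:
  assumes p: "p \<in> levelN f" and g: "is_grad f p g"
  shows "g \<in> orth"
proof -
  have "g \<noteq> 0" using grad_inner_levelN[OF p g] by auto
  moreover have "g /\<^sub>R norm g \<in> orth" using normal_nonneg p g by blast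
  hence "norm g *\<^sub>R (g /\<^sub>R norm g) \<in> orth" by (rule orth_scaleR) simp
  ultimately show ?thesis by simp
qed

lemma normal_propE:
  assumes "normal_prop f p k"
  obtains g a where "is_grad f p g" "a > 0" "k = a *\<^sub>R g"
proof -
  obtain g c where g: "is_grad f p g" "g \<noteq> 0" "c > 0" "g /\<^sub>R norm g = c *\<^sub>R k"
    using assms unfolding normal_prop_def by blast
  have "k = (1 / c) *\<^sub>R (g /\<^sub>R norm g)" using g(3,4) by simp
  hence k: "k = (1 / (c * norm g)) *\<^sub>R g" by (simp add: divide_inverse_commute)
  show ?thesis by (rule that[OF g(1) _ k]) (use g(2,3) in simp)
qed

lemma normal_prop_scaleR:
  assumes "normal_prop f p k" "t > 0"
  shows "normal_prop f p (t *\<^sub>R k)"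
proof -
  obtain g c where g: "is_grad f p g" "g \<noteq> 0" "c > 0" "g /\<^sub>R norm g = c *\<^sub>R k"
    using assms(1) unfolding normal_prop_def by blast
  show ?thesis unfolding normal_prop_def
    by (rule exI[of _ g], rule exI[of _ "c / t"]) (use g assms(2) in auto)
qed

lemma normal_in_orth:
  assumes p: "p \<in> levelN f" and np: "normal_prop f p k"
  shows "k \<in> orth"
proof -
  obtain g a where g: "is_grad f p g" "a > 0" "k = a *\<^sub>R g" using normal_propE[OF np] .
  show ?thesis unfolding g(3) using grad_in_orth[OF p g(1)] g(2) by (simp add: orth_scaleR)
qed

lemma normal_maximizes:
  assumes p: "p \<in> levelN f" and np: "normal_prop f p k"
  shows "maximizes k p" "0 < k \<bullet> p"
proof -
  obtain g a where g: "is_grad f p g" "a > 0" "k = a *\<^sub>R g" using normal_propE[OF np] .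
  show "maximizes k p"
    using grad_support[OF p g(1)] grad_inner_levelN[OF p g(1)] g(2,3) levelN_subset_K p
    by (auto simp: maximizes_def)
  show "0 < k \<bullet> p" using grad_inner_levelN[OF p g(1)] g(2,3) by simp
qed

lemma maximizer_in_levelN:
  assumes mx: "maximizes \<nu> q" and pos: "0 < \<nu> \<bullet> q"
  shows "q \<in> levelN f"
proof -
  have qo: "q \<in> orth" and fq1: "f q \<le> 1" using mx by (auto simp: maximizes_def K_def)
  have q0: "q \<noteq> 0" using pos by auto
  have fq: "f q > 0" using toric.pos toric_axioms qo q0 by auto
  have "\<nu> \<bullet> ((1 / f q) *\<^sub>R q) \<le> \<nu> \<bullet> q"
    using mx scaled_in_K[OF qo q0] by (auto simp: maximizes_def)
  hence "\<nu> \<bullet> q \<le> (\<nu> \<bullet> q) * f q" using fq by (simp add: divide_le_eq)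
  hence "1 \<le> f q" using pos by simp
  thus ?thesis using qo fq1 by (simp add: levelN_def)
qed

lemma maximizer_unique:
  assumes mp: "maximizes \<nu> p" and mq: "maximizes \<nu> q" and pos: "0 < \<nu> \<bullet> p"
  shows "p = q"
proof -
  have "\<nu> \<bullet> q \<le> \<nu> \<bullet> p" "\<nu> \<bullet> p \<le> \<nu> \<bullet> q" using mp mq by (simp_all add: maximizes_def)
  hence eq: "\<nu> \<bullet> q = \<nu> \<bullet> p" by linarith
  have seg: "f (p + t *\<^sub>R (q - p)) = 1" if t: "t \<in> {0..1}" for t
  proof -
    have "p + t *\<^sub>R (q - p) \<in> K" using K_segment[OF _ _ t] mp mq by (simp add: maximizes_def)
    moreover have same: "\<nu> \<bullet> (p + t *\<^sub>R (q - p)) = \<nu> \<bullet> p"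
      using eq by (simp add: inner_add_right inner_diff_right)
    ultimately have "maximizes \<nu> (p + t *\<^sub>R (q - p))" using mp by (simp add: maximizes_def)
    moreover have "0 < \<nu> \<bullet> (p + t *\<^sub>R (q - p))" using pos same by linarith
    ultimately have "p + t *\<^sub>R (q - p) \<in> levelN f" by (rule maximizer_in_levelN)
    thus ?thesis by (simp add: levelN_def)
  qed
  have "q \<in> levelN f" using maximizer_in_levelN[OF mq] eq pos by simp
  with maximizer_in_levelN[OF mp pos] show ?thesis using seg by (rule levelN_no_segment)
qed

lemma act_eq:
  assumes p: "p \<in> levelN f" "normal_prop f p (ivec k)"
  shows "act f k = p \<bullet> ivec k"
proof -
  have "q = p" if "q \<in> levelN f" "normal_prop f q (ivec k)" for q
    by (rule maximizer_unique[OF normal_maximizes(1)[OF that] normal_maximizes(1)[OF p]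
          normal_maximizes(2)[OF that]])
  hence "(THE p. p \<in> levelN f \<and> normal_prop f p (ivec k)) = p"
    using p by (intro the_equality) blast+
  thus ?thesis by (simp add: act_def)
qed

lemma maximizer_descent_nonpos:
  assumes pp: "\<forall>i. 0 < p $ i" and pN: "p \<in> levelN f" and mx: "maximizes \<nu> p"
    and g: "is_grad f p g" and gw: "g \<bullet> w < 0"
  shows "\<nu> \<bullet> w \<le> 0"
proof -
  have "p \<in> interior orth"
    using pp open_positive_orthant positive_orthant_subset_orth by (intro interiorI) auto
  hence "(f has_derivative (\<lambda>v. g \<bullet> v)) (at p)"
    using g at_within_interior[of p orth] by (simp add: is_grad_def)
  hence "((\<lambda>s. f (p + s *\<^sub>R w)) has_field_derivative g \<bullet> w) (at 0)"
    using has_field_derivative_along_line[of f "\<lambda>v. g \<bullet> v" p 0 w] by simp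
  from DERIV_neg_dec_right[OF this gw]
  obtain d where d: "d > 0" "\<And>h. h > 0 \<Longrightarrow> h < d \<Longrightarrow> f (p + h *\<^sub>R w) < 1"
    using pN by (auto simp: levelN_def)
  have "((\<lambda>h. p + h *\<^sub>R w) \<longlongrightarrow> p) (at_right 0)"
    by (auto intro!: tendsto_eq_intros)
  hence "eventually (\<lambda>h. p + h *\<^sub>R w \<in> {x. \<forall>i. 0 < x $ i}) (at_right 0)"
    using open_positive_orthant pp by (intro topological_tendstoD) auto
  moreover have "eventually (\<lambda>h. 0 < h \<and> h < d) (at_right 0)"
    using d(1) eventually_at_right_less by (auto simp: eventually_at_right[of "0::real" 1])
  ultimately have "eventually (\<lambda>h. 0 < h \<and> p + h *\<^sub>R w \<in> K) (at_right 0)"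
    by eventually_elim (use d(2) positive_orthant_subset_orth in \<open>auto simp: K_def less_imp_le\<close>)
  then obtain h where h: "0 < h" "p + h *\<^sub>R w \<in> K"
    using eventually_happens' trivial_limit_at_right_real by blast
  hence "h * (\<nu> \<bullet> w) \<le> 0" using mx by (auto simp: maximizes_def inner_add_right)
  thus ?thesis using h(1) by (simp add: mult_le_0_iff)
qed

text \<open>The positivity of the coordinates of \<open>p\<close> cannot be dropped: at a boundary point of the
  orthant the maximized directions form a cone larger than the ray through the gradient.\<close>

lemma normal_prop_of_maximizer:
  assumes pp: "\<forall>i. 0 < p $ i" and pN: "p \<in> levelN f"
    and mx: "maximizes \<nu> p" and n0: "\<nu> \<noteq> 0"
  shows "normal_prop f p \<nu>"
proof -
  obtain g where g: "is_grad f p g" "g \<noteq> 0" using regular pN by blast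
  obtain c where c: "c \<ge> 0" "\<nu> = c *\<^sub>R g"
    using nonneg_multiple_if_descent_nonpos[OF g(2) maximizer_descent_nonpos[OF pp pN mx g(1)]] by blast
  have "c > 0" using c n0 by (cases "c = 0") auto
  show ?thesis unfolding normal_prop_def
  proof (intro exI conjI)
    show "is_grad f p g" "g \<noteq> 0" by (fact g)+
    show "0 < 1 / (c * norm g)" using \<open>c > 0\<close> g by simp
    show "g /\<^sub>R norm g = (1 / (c * norm g)) *\<^sub>R \<nu>" using \<open>c > 0\<close> g by (simp add: c divide_inverse)
  qed
qed

section \<open>Lattice directions realizing the supremum\<close>

lemma grad_strict_support_away:
  assumes x1: "x1 \<in> levelN f" and g1: "is_grad f x1 g1" and \<eta>: "\<eta> > 0"
  shows "\<exists>M<1. \<forall>x\<in>K. \<eta> \<le> dist x x1 \<longrightarrow> g1 \<bullet> x \<le> M"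
proof -
  define S where "S = K \<inter> {x. \<eta> \<le> dist x x1}"
  have cS: "compact S" unfolding S_def
    by (intro compact_Int_closed compact_K closed_Collect_le continuous_intros)
  show ?thesis
  proof (cases "S = {}")
    case True thus ?thesis by (intro exI[of _ 0]) (auto simp: S_def)
  next
    case False
    have "continuous_on S (\<lambda>x. g1 \<bullet> x)" by (intro continuous_intros)
    then obtain z where z: "z \<in> S" "\<forall>x\<in>S. g1 \<bullet> x \<le> g1 \<bullet> z"
      using continuous_attains_sup[OF cS False] by blast
    have "g1 \<bullet> z < 1"
    proof (rule ccontr)
      assume "\<not> g1 \<bullet> z < 1"
      hence "maximizes g1 z" using z grad_support[OF x1 g1] by (force simp: maximizes_def S_def)
      moreover have "maximizes g1 x1" "0 < g1 \<bullet> x1"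
        using grad_support[OF x1 g1] grad_inner_levelN[OF x1 g1] levelN_subset_K x1
        by (auto simp: maximizes_def)
      ultimately have "x1 = z" using maximizer_unique by blast
      thus False using z \<eta> by (simp add: S_def)
    qed
    thus ?thesis using z by (intro exI[of _ "g1 \<bullet> z"]) (auto simp: S_def)
  qed
qed

lemma maximizer_near:
  assumes x1: "x1 \<in> levelN f" and g1: "is_grad f x1 g1" and \<eta>: "\<eta> > 0"
  shows "\<exists>\<delta>>0. \<forall>\<nu> p. dist \<nu> g1 < \<delta> \<longrightarrow> maximizes \<nu> p \<longrightarrow> dist p x1 < \<eta>"
proof -
  obtain R where R: "R > 0" "\<forall>x\<in>K. norm x \<le> R"
    using compact_imp_bounded[OF compact_K] bounded_pos by blast
  obtain M where M: "M < 1" "\<forall>x\<in>K. \<eta> \<le> dist x x1 \<longrightarrow> g1 \<bullet> x \<le> M"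
    using grad_strict_support_away[OF x1 g1 \<eta>] by blast
  define \<delta> where "\<delta> = (1 - M) / (2 * R)"
  have \<delta>: "\<delta> > 0" "2 * (\<delta> * R) = 1 - M" using R M by (simp_all add: \<delta>_def)
  have "dist p x1 < \<eta>" if d: "dist \<nu> g1 < \<delta>" and mx: "maximizes \<nu> p" for \<nu> p
  proof (rule ccontr)
    assume far: "\<not> dist p x1 < \<eta>"
    have close: "\<bar>\<nu> \<bullet> x - g1 \<bullet> x\<bar> < \<delta> * R" if "x \<in> K" for x
    proof -
      have "\<bar>\<nu> \<bullet> x - g1 \<bullet> x\<bar> \<le> norm (\<nu> - g1) * norm x"
        using Cauchy_Schwarz_ineq2[of "\<nu> - g1" x] by (simp add: inner_diff_left)
      also have "\<dots> \<le> norm (\<nu> - g1) * R" using R(2) that by (simp add: mult_left_mono)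
      also have "\<dots> < \<delta> * R" using d R(1) by (simp add: dist_norm)
      finally show ?thesis .
    qed
    have pK: "p \<in> K" and x1K: "x1 \<in> K" using mx x1 levelN_subset_K by (auto simp: maximizes_def)
    have "1 - \<delta> * R < \<nu> \<bullet> x1" using close[OF x1K] grad_inner_levelN[OF x1 g1] by (simp add: inner_commute)
    also have "\<dots> \<le> \<nu> \<bullet> p" using mx x1K by (simp add: maximizes_def)
    also have "\<dots> < M + \<delta> * R" using close[OF pK] M(2) pK far by force
    finally show False using \<delta>(2) by linarith
  qed
  thus ?thesis using \<delta>(1) by blast
qed

lemma normal_near_interior_gradient:
  assumes x1: "x1 \<in> levelN f" "\<forall>i. 0 < x1 $ i" and g1: "is_grad f x1 g1" and \<eta>: "\<eta> > 0"
  shows "\<exists>\<delta>>0. \<forall>\<nu>. dist \<nu> g1 < \<delta> \<longrightarrow> (\<forall>i. 0 < \<nu> $ i) \<longrightarrow>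
           (\<exists>p\<in>levelN f. normal_prop f p \<nu> \<and> dist p x1 < \<eta>)"
proof -
  obtain r where r: "r > 0" "ball x1 r \<subseteq> {x. \<forall>i. 0 < x $ i}"
    using openE[OF open_positive_orthant, of x1] x1(2) by auto
  obtain \<delta> where \<delta>: "\<delta> > 0" "\<forall>\<nu> p. dist \<nu> g1 < \<delta> \<longrightarrow> maximizes \<nu> p \<longrightarrow> dist p x1 < min \<eta> r"
    using maximizer_near[OF x1(1) g1, of "min \<eta> r"] \<eta> r(1) by auto
  have "\<exists>p\<in>levelN f. normal_prop f p \<nu> \<and> dist p x1 < \<eta>"
    if d: "dist \<nu> g1 < \<delta>" and \<nu>: "\<forall>i. 0 < \<nu> $ i" for \<nu>
  proof -
    have "continuous_on K (\<lambda>x. \<nu> \<bullet> x)" by (intro continuous_intros)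
    moreover have "K \<noteq> {}" using x1(1) levelN_subset_K by auto
    ultimately obtain p where mx: "maximizes \<nu> p"
      using continuous_attains_sup[OF compact_K] unfolding maximizes_def by blast
    have "dist p x1 < min \<eta> r" using \<delta>(2) d mx by blast
    hence "p \<in> ball x1 r" and near: "dist p x1 < \<eta>" by (simp_all add: dist_commute)
    hence pp: "\<forall>i. 0 < p $ i" using r(2) by blast
    have "0 < \<nu> \<bullet> p" using inner_pos_of_positive_coords[OF \<nu> pp] .
    hence pN: "p \<in> levelN f" using maximizer_in_levelN[OF mx] by blast
    have "\<nu> \<noteq> 0" using \<nu> by (metis less_irrefl zero_index)
    thus ?thesis using normal_prop_of_maximizer[OF pp pN mx] pN near by blast
  qed
  thus ?thesis using \<delta>(1) by blast
qed

lemma inner_le_f_mult: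
  assumes p: "p \<in> levelN f" and np: "normal_prop f p k" and y: "y \<in> orth"
  shows "y \<bullet> k \<le> f y * (p \<bullet> k)"
proof (cases "y = 0")
  case True thus ?thesis using f_zero by simp
next
  case False
  have fy: "f y > 0" using pos y False by auto
  have "k \<bullet> ((1 / f y) *\<^sub>R y) \<le> k \<bullet> p"
    using normal_maximizes(1)[OF p np] scaled_in_K[OF y False] unfolding maximizes_def by blast
  hence "(y \<bullet> k) / f y \<le> p \<bullet> k" by (simp add: inner_commute)
  thus ?thesis using fy by (simp add: divide_le_eq mult.commute)
qed

lemma grad_norm_le:
  assumes p: "p \<in> levelN f" and g: "is_grad f p g"
  shows "norm g \<le> (\<Sum>i\<in>UNIV. f (axis i 1))"
proof -
  have go: "g \<in> orth" using grad_in_orth[OF p g] .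
  have "g $ i \<le> f (axis i 1)" for i
  proof -
    have a0: "axis i (1::real) \<noteq> 0" by (simp add: axis_eq_0_iff)
    have fa: "f (axis i 1) > 0" using pos axis_in_orth[of i] a0 by blast
    have "g \<bullet> ((1 / f (axis i 1)) *\<^sub>R axis i 1) \<le> 1"
      by (rule grad_support[OF p g scaled_in_K[OF axis_in_orth a0]])
    hence "g $ i / f (axis i 1) \<le> 1" by (simp add: inner_axis)
    thus ?thesis using fa by (simp add: divide_le_eq)
  qed
  moreover have "norm g \<le> (\<Sum>i\<in>UNIV. \<bar>g $ i\<bar>)" by (rule norm_le_l1_cart)
  ultimately show ?thesis using go by (smt (verit, best) orth_def mem_Collect_eq sum_mono)
qed

lemma interior_levelN_dense:
  assumes x0: "x0 \<in> levelN f" and e: "e > 0"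
  shows "\<exists>x1\<in>levelN f. (\<forall>i. 0 < x1 $ i) \<and> dist x1 x0 < e"
proof -
  define one :: "real^'n" where "one = (\<chi> i. 1)"
  define z where "z = (\<lambda>s::real. x0 + s *\<^sub>R one)"
  have x0o: "x0 \<in> orth" using x0 by (simp add: levelN_def)
  have zpos: "0 < z s $ i" if "s > 0" for s i
    using x0o that by (simp add: z_def one_def orth_def add_nonneg_pos)
  have zo: "z s \<in> orth" if "s \<ge> 0" for s
    using x0o that by (auto simp: z_def one_def orth_def)
  have fz: "f (z s) > 0" if "s \<ge> 0" for s
  proof (cases "s = 0")
    case True thus ?thesis using x0 by (simp add: z_def levelN_def)
  next
    case False
    hence "z s \<noteq> 0" using zpos[of s undefined] that by auto
    thus ?thesis using pos zo[OF that] by auto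
  qed
  define xs where "xs = (\<lambda>s. (1 / f (z s)) *\<^sub>R z s)"
  have "z ` {0..} \<subseteq> orth" using zo by auto
  hence "continuous_on {0..} (\<lambda>s. f (z s))"
    by (intro continuous_on_compose2[OF cont _ _]) (auto simp: z_def intro!: continuous_intros)
  moreover have "continuous_on {0..} z" unfolding z_def by (intro continuous_intros)
  moreover have "\<forall>s\<in>{0..}. f (z s) \<noteq> 0" using fz by force
  ultimately have "continuous_on {0..} xs" unfolding xs_def by (intro continuous_intros)
  moreover have "xs 0 = x0" using x0 by (simp add: xs_def z_def levelN_def)
  ultimately obtain d where d: "d > 0" "\<And>s. s \<in> {0..} \<Longrightarrow> dist s 0 < d \<Longrightarrow> dist (xs s) x0 < e"
    using e unfolding continuous_on_iff by (metis atLeast_iff order_refl)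
  define s where "s = d / 2"
  have s: "s > 0" "dist (xs s) x0 < e" using d by (auto simp: s_def)
  have "xs s \<in> levelN f" unfolding xs_def
    using scaled_in_levelN[OF zo] zpos[OF s(1), of undefined] s(1) by (metis less_le less_irrefl zero_index)
  moreover have "\<forall>i. 0 < xs s $ i" using zpos[OF s(1)] fz[of s] s(1) by (simp add: xs_def)
  ultimately show ?thesis using s(2) by blast
qed

lemma exists_interior_gradient_ratio_gt:
  assumes y: "y \<in> orth" and \<epsilon>: "\<epsilon> > 0"
  shows "\<exists>x1 g1. x1 \<in> levelN f \<and> (\<forall>i. 0 < x1 $ i) \<and> is_grad f x1 g1 \<and> f y - \<epsilon> < y \<bullet> g1"
proof (cases "y = 0")
  case True
  have "axis undefined (1::real) \<noteq> 0" by (simp add: axis_eq_0_iff)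
  then obtain x1 where x1: "x1 \<in> levelN f" "\<forall>i. 0 < x1 $ i"
    using interior_levelN_dense[OF scaled_in_levelN[OF axis_in_orth] zero_less_one] by blast
  moreover obtain g1 where "is_grad f x1 g1" using regular x1 by blast
  ultimately show ?thesis using True f_zero \<epsilon> by auto
next
  case False
  have fy: "f y > 0" using pos y False by auto
  define x0 where "x0 = (1 / f y) *\<^sub>R y"
  have x0: "x0 \<in> levelN f" using scaled_in_levelN[OF y False] by (simp add: x0_def)
  define G where "G = (\<Sum>i\<in>UNIV. f (axis i (1::real)))"
  have G: "G \<ge> 0" unfolding G_def using nonneg axis_in_orth by (intro sum_nonneg) blast
  define e where "e = \<epsilon> / (f y * (G + 1))"
  have e: "e > 0" using \<epsilon> fy G by (simp add: e_def)
  obtain x1 where x1: "x1 \<in> levelN f" "\<forall>i. 0 < x1 $ i" "dist x1 x0 < e"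
    using interior_levelN_dense[OF x0 e] by blast
  obtain g1 where g1: "is_grad f x1 g1" using regular x1(1) by blast
  have "g1 \<bullet> (x1 - x0) \<le> G * e"
  proof -
    have "g1 \<bullet> (x1 - x0) \<le> norm g1 * norm (x1 - x0)" by (rule norm_cauchy_schwarz)
    also have "\<dots> \<le> G * e"
      using grad_norm_le[OF x1(1) g1] x1(3) G by (intro mult_mono) (auto simp: G_def dist_norm)
    finally show ?thesis .
  qed
  hence "1 - G * e \<le> g1 \<bullet> x0"
    using grad_inner_levelN[OF x1(1) g1] by (simp add: inner_diff_right)
  hence "f y * (1 - G * e) \<le> f y * (g1 \<bullet> x0)" using fy by (simp add: mult_left_mono)
  also have "\<dots> = y \<bullet> g1" using fy by (simp add: x0_def inner_commute)
  finally have "f y * (1 - G * e) \<le> y \<bullet> g1" .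
  moreover have "f y - \<epsilon> < f y * (1 - G * e)"
  proof -
    have "G + 1 \<noteq> 0" "f y \<noteq> 0" using fy G by auto
    hence "f y * (G * e) = \<epsilon> * (G / (G + 1))" by (simp add: e_def)
    also have "\<dots> < \<epsilon>" using \<epsilon> G by (simp add: divide_less_eq)
    finally show ?thesis by (simp add: right_diff_distrib)
  qed
  ultimately show ?thesis using x1 g1 by force
qed

text \<open>Perturb the gradient at an interior point of \<open>N\<close> to a positive rational direction: by
  \<open>maximizer_near\<close> the point of \<open>N\<close> with that normal stays interior, and the required
  inequality, being strict at the unperturbed pair, is open in (direction, point).\<close>

lemma exists_integer_normal_ratio_ge:
  assumes y: "y \<in> orth" and \<epsilon>: "\<epsilon> > 0"
  shows "\<exists>k p. (\<forall>i. 1 \<le> k $ i) \<and> p \<in> levelN f \<and> normal_prop f p (ivec k) \<and>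
           (f y - \<epsilon>) * (p \<bullet> ivec k) \<le> y \<bullet> ivec k"
proof -
  obtain x1 g1 where x1: "x1 \<in> levelN f" "\<forall>i. 0 < x1 $ i" and g1: "is_grad f x1 g1"
    and gt: "f y - \<epsilon> < y \<bullet> g1"
    using exists_interior_gradient_ratio_gt[OF y \<epsilon>] by blast
  define S where "S = {z::(real^'n) \<times> (real^'n). (f y - \<epsilon>) * (fst z \<bullet> snd z) < y \<bullet> fst z}"
  have "open S" unfolding S_def by (intro open_Collect_less continuous_intros)
  moreover have "(g1, x1) \<in> S" using gt grad_inner_levelN[OF x1(1) g1] by (simp add: S_def)
  ultimately obtain A B where AB: "open A" "open B" "g1 \<in> A" "x1 \<in> B" "A \<times> B \<subseteq> S"
    by (rule open_prod_elim) blast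
  obtain ra where ra: "ra > 0" "ball g1 ra \<subseteq> A" using openE[OF AB(1,3)] .
  obtain rb where rb: "rb > 0" "ball x1 rb \<subseteq> B" using openE[OF AB(2,4)] .
  obtain \<delta> where \<delta>: "\<delta> > 0" "\<forall>\<nu>. dist \<nu> g1 < \<delta> \<longrightarrow> (\<forall>i. 0 < \<nu> $ i) \<longrightarrow>
      (\<exists>p\<in>levelN f. normal_prop f p \<nu> \<and> dist p x1 < rb)"
    using normal_near_interior_gradient[OF x1 g1 rb(1)] by blast
  obtain j :: nat and k where jk: "0 < j" "\<forall>i. 1 \<le> k $ i"
    and near: "dist ((1 / real j) *\<^sub>R ivec k) g1 < min \<delta> ra"
    using exists_integer_direction_near[OF grad_in_orth[OF x1(1) g1], of "min \<delta> ra"] \<delta>(1) ra(1)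
    by auto
  define \<nu> where "\<nu> = (1 / real j) *\<^sub>R ivec k"
  have "\<forall>i. 0 < \<nu> $ i"
  proof
    fix i
    have "0 < k $ i" using jk(2) by (smt (verit))
    thus "0 < \<nu> $ i" using jk(1) by (simp add: \<nu>_def ivec_def)
  qed
  then obtain p where p: "p \<in> levelN f" "normal_prop f p \<nu>" "dist p x1 < rb"
    using \<delta>(2) near by (auto simp: \<nu>_def)
  have "\<nu> \<in> A" "p \<in> B" using ra(2) rb(2) near p(3) by (auto simp: \<nu>_def dist_commute)
  hence "(\<nu>, p) \<in> S" using AB(5) by blast
  hence less: "(f y - \<epsilon>) * (\<nu> \<bullet> p) < y \<bullet> \<nu>" by (simp add: S_def)
  have ik: "ivec k = real j *\<^sub>R \<nu>" using jk(1) by (simp add: \<nu>_def)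
  have "normal_prop f p (ivec k)" unfolding ik using p(2) jk(1) by (simp add: normal_prop_scaleR)
  moreover have "(f y - \<epsilon>) * (p \<bullet> ivec k) \<le> y \<bullet> ivec k"
    using mult_left_mono[OF less_imp_le[OF less], of "real j"]
    by (simp add: ik inner_commute algebra_simps)
  ultimately show ?thesis using jk(2) p(1) by blast
qed

section \<open>The action spectrum and its asymptotics\<close>

lemma action_spectrum_eq_image: "action_spectrum f = (\<lambda>k. (k, act f k)) ` (Nset f 0 - {0})"
proof (intro equalityI subsetI)
  fix ka assume "ka \<in> action_spectrum f"
  then obtain k p where ka: "ka = (k, p \<bullet> ivec k)" "k \<noteq> 0" "p \<in> levelN f" "normal_prop f p (ivec k)"
    unfolding action_spectrum_def by blast
  have "k \<in> Nset f 0 - {0}"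
    using normal_in_orth[OF ka(3,4)] ka(2-4) by (auto simp: Nset_def ivec_in_orth_iff)
  moreover have "ka = (k, act f k)" using act_eq[OF ka(3,4)] ka(1) by simp
  ultimately show "ka \<in> (\<lambda>k. (k, act f k)) ` (Nset f 0 - {0})" by blast
next
  fix ka assume "ka \<in> (\<lambda>k. (k, act f k)) ` (Nset f 0 - {0})"
  then obtain k p where k: "ka = (k, act f k)" "k \<noteq> 0" "p \<in> levelN f" "normal_prop f p (ivec k)"
    unfolding Nset_def by blast
  thus "ka \<in> action_spectrum f"
    unfolding action_spectrum_def using act_eq[OF k(3,4)] by auto
qed

lemma SUP_action_ratio:
  assumes y: "y \<in> orth"
  shows "(SUP ka\<in>action_spectrum f. ereal (y \<bullet> ivec (fst ka) / snd ka)) = ereal (f y)"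
proof (rule antisym)
  show "(SUP ka\<in>action_spectrum f. ereal (y \<bullet> ivec (fst ka) / snd ka)) \<le> ereal (f y)"
  proof (rule SUP_least)
    fix ka assume "ka \<in> action_spectrum f"
    then obtain k p where ka: "ka = (k, p \<bullet> ivec k)" "p \<in> levelN f" "normal_prop f p (ivec k)"
      unfolding action_spectrum_def by blast
    have "0 < p \<bullet> ivec k" using normal_maximizes(2)[OF ka(2,3)] by (simp add: inner_commute)
    thus "ereal (y \<bullet> ivec (fst ka) / snd ka) \<le> ereal (f y)"
      using inner_le_f_mult[OF ka(2,3) y] by (simp add: ka divide_le_eq)
  qed
next
  show "ereal (f y) \<le> (SUP ka\<in>action_spectrum f. ereal (y \<bullet> ivec (fst ka) / snd ka))"
  proof (rule ereal_le_epsilon2)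
    fix e :: real assume e: "0 < e"
    obtain k p where kp: "\<forall>j. 1 \<le> k $ j" "p \<in> levelN f" "normal_prop f p (ivec k)"
      "(f y - e) * (p \<bullet> ivec k) \<le> y \<bullet> ivec k" using exists_integer_normal_ratio_ge[OF y e] by blast
    have "k \<noteq> 0" using kp(1) by (metis zero_index zero_less_one not_le)
    hence mem: "(k, p \<bullet> ivec k) \<in> action_spectrum f"
      unfolding action_spectrum_def using kp(2,3) by blast
    have "0 < p \<bullet> ivec k" using normal_maximizes(2)[OF kp(2,3)] by (simp add: inner_commute)
    hence "f y - e \<le> y \<bullet> ivec k / (p \<bullet> ivec k)" using kp(4) by (simp add: le_divide_eq)
    hence "ereal (f y - e) \<le> (SUP ka\<in>action_spectrum f. ereal (y \<bullet> ivec (fst ka) / snd ka))"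
      by (intro SUP_upper2[OF mem]) simp
    hence "ereal (f y - e) + ereal e \<le> (SUP ka\<in>action_spectrum f. ereal (y \<bullet> ivec (fst ka) / snd ka)) + ereal e"
      by (rule add_right_mono)
    thus "ereal (f y) \<le> (SUP ka\<in>action_spectrum f. ereal (y \<bullet> ivec (fst ka) / snd ka)) + ereal e"
      by simp
  qed
qed

lemma SUP_INF_above:
  assumes y: "y \<in> orth" and e: "f y < e"
  shows "(SUP l\<in>{1::nat..}. INF k\<in>Nset f (int l). ereal (e * act f k - y \<bullet> ivec k)) = \<infinity>"
proof -
  have a0: "axis undefined (1::real) \<noteq> 0" by (simp add: axis_eq_0_iff)
  define r where "r = 1 / f (axis undefined 1)"
  have "f (axis undefined 1) > 0" using pos axis_in_orth[of undefined] a0 by blast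
  hence r: "r > 0" by (simp add: r_def)
  have rK: "r *\<^sub>R axis undefined 1 \<in> K" using scaled_in_K[OF axis_in_orth a0] by (simp add: r_def)
  define c where "c = (e - f y) * r"
  have c: "c > 0" using e r by (simp add: c_def)
  have lb: "ereal (c * real l) \<le> (INF k\<in>Nset f (int l). ereal (e * act f k - y \<bullet> ivec k))" for l :: nat
  proof (rule INF_greatest)
    fix k assume "k \<in> Nset f (int l)"
    then obtain p where kl: "\<forall>j. int l \<le> k $ j" and p: "p \<in> levelN f" "normal_prop f p (ivec k)"
      unfolding Nset_def by blast
    have "ivec k \<bullet> (r *\<^sub>R axis undefined 1) \<le> ivec k \<bullet> p"
      using normal_maximizes(1)[OF p] rK unfolding maximizes_def by blast
    hence "r * real_of_int (k $ undefined) \<le> act f k"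
      using act_eq[OF p] by (simp add: inner_axis' ivec_def inner_commute)
    moreover have "real l \<le> real_of_int (k $ undefined)" using kl by (metis of_int_le_iff of_int_of_nat_eq)
    ultimately have "r * real l \<le> act f k" using r by (smt (verit) mult_left_mono)
    hence "c * real l \<le> (e - f y) * act f k" using e by (simp add: c_def mult.assoc mult_left_mono)
    also have "\<dots> \<le> e * act f k - y \<bullet> ivec k"
      using inner_le_f_mult[OF p y] act_eq[OF p] by (simp add: algebra_simps inner_commute)
    finally show "ereal (c * real l) \<le> ereal (e * act f k - y \<bullet> ivec k)" by simp
  qed
  have "(SUP l\<in>{1::nat..}. INF k\<in>Nset f (int l). ereal (e * act f k - y \<bullet> ivec k)) = top"
  proof (subst SUP_eq_top_iff, intro allI impI)
    fix x :: ereal assume "x < top"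
    then obtain B where B: "x \<le> ereal B" by (cases x) auto
    obtain n :: nat where n: "B / c < real n" using reals_Archimedean2 by blast
    have "B < c * real (n + 1)" using n c by (simp add: divide_less_eq algebra_simps)
    hence "x < ereal (c * real (n + 1))" using B by (simp add: le_less_trans)
    also have "\<dots> \<le> (INF k\<in>Nset f (int (n + 1)). ereal (e * act f k - y \<bullet> ivec k))" by (rule lb)
    finally show "\<exists>l\<in>{1::nat..}. x < (INF k\<in>Nset f (int l). ereal (e * act f k - y \<bullet> ivec k))"
      by (intro bexI[of _ "n + 1"]) auto
  qed
  thus ?thesis by (simp add: top_ereal_def)
qed

lemma SUP_INF_below:
  assumes y: "y \<in> orth" and e: "e < f y"
  shows "(SUP l\<in>{1::nat..}. INF k\<in>Nset f (int l). ereal (e * act f k - y \<bullet> ivec k)) = -\<infinity>"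
proof -
  obtain k0 p where kp: "\<forall>j. 1 \<le> k0 $ j" "p \<in> levelN f" "normal_prop f p (ivec k0)"
    "(f y - (f y - e) / 2) * (p \<bullet> ivec k0) \<le> y \<bullet> ivec k0"
    using exists_integer_normal_ratio_ge[OF y, of "(f y - e) / 2"] e by auto
  define A0 where "A0 = p \<bullet> ivec k0"
  have A0: "A0 > 0" using normal_maximizes(2)[OF kp(2,3)] by (simp add: A0_def inner_commute)
  define d where "d = e * A0 - y \<bullet> ivec k0"
  have d: "d < 0"
  proof -
    have "e < f y - (f y - e) / 2" using e by (simp add: field_simps)
    hence "e * A0 < (f y - (f y - e) / 2) * A0" using A0 by (intro mult_strict_right_mono)
    thus ?thesis using kp(4) by (simp add: d_def A0_def)
  qed
  define kt where "kt = (\<lambda>t::nat. (\<chi> j. int t * k0 $ j))"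
  have ivkt: "ivec (kt t) = real t *\<^sub>R ivec k0" for t
    by (simp add: kt_def ivec_def vec_eq_iff)
  have val: "e * act f (kt t) - y \<bullet> ivec (kt t) = real t * d"
    and mem: "kt t \<in> Nset f (int t)" if t: "t \<ge> 1" for t
  proof -
    have np: "normal_prop f p (ivec (kt t))" unfolding ivkt by (rule normal_prop_scaleR[OF kp(3)]) (use t in simp)
    show "e * act f (kt t) - y \<bullet> ivec (kt t) = real t * d"
      using act_eq[OF kp(2) np] by (simp add: ivkt d_def A0_def algebra_simps)
    have "int t \<le> kt t $ j" for j using kp(1) mult_left_mono[of 1 "k0 $ j" "int t"] by (simp add: kt_def)
    thus "kt t \<in> Nset f (int t)" unfolding Nset_def using kp(2) np by blast
  qed
  have "(INF k\<in>Nset f (int l). ereal (e * act f k - y \<bullet> ivec k)) = bot" if l: "l \<ge> 1" for l :: nat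
  proof (subst INF_eq_bot_iff, intro allI impI)
    fix x :: ereal assume "bot < x"
    then obtain B where B: "ereal B \<le> x" by (cases x) auto
    obtain n :: nat where n: "B / d < real n" using reals_Archimedean2 by blast
    define t where "t = l + n"
    have t: "t \<ge> 1" "l \<le> t" using l by (auto simp: t_def)
    have "real t * d \<le> real n * d" using d by (simp add: t_def mult_right_mono_neg)
    also have "\<dots> < B" using n d by (simp add: pos_divide_less_eq mult.commute neg_divide_less_eq)
    finally have "ereal (real t * d) < ereal B" by simp
    hence "ereal (real t * d) < x" using B by (rule less_le_trans)
    hence "ereal (e * act f (kt t) - y \<bullet> ivec (kt t)) < x" by (simp add: val[OF t(1)])
    moreover have "kt t \<in> Nset f (int l)" using mem[OF t(1)] Nset_antimono[of "int l" "int t" f] t(2) by auto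
    ultimately show "\<exists>k\<in>Nset f (int l). ereal (e * act f k - y \<bullet> ivec k) < x" by blast
  qed
  thus ?thesis by (simp add: bot_ereal_def)
qed

end

lemma threshold_unique:
  fixes S :: "real \<Rightarrow> ereal"
  assumes above: "\<And>e. c < e \<Longrightarrow> S e = \<infinity>" and below: "\<And>e. e < c \<Longrightarrow> S e = -\<infinity>"
  shows "(\<forall>e. (e > e' \<longrightarrow> S e = \<infinity>) \<and> (e < e' \<longrightarrow> S e = -\<infinity>)) \<longleftrightarrow> e' = c"
proof
  assume H: "\<forall>e. (e > e' \<longrightarrow> S e = \<infinity>) \<and> (e < e' \<longrightarrow> S e = -\<infinity>)"
  show "e' = c"
  proof (rule ccontr)
    assume "e' \<noteq> c"
    define e where "e = (e' + c) / 2"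
    show False
    proof (cases "e' < c")
      case True
      hence "S e = \<infinity>" "S e = -\<infinity>" using H below[of e] by (auto simp: e_def)
      thus False by simp
    next
      case False
      hence "S e = -\<infinity>" "S e = \<infinity>" using H above[of e] \<open>e' \<noteq> c\<close> by (auto simp: e_def)
      thus False by simp
    qed
  qed
qed (use above below in auto)

theorem proposition4p3:
  fixes f :: "real^'n \<Rightarrow> real" and hb :: real
  assumes cont: "continuous_on orth f"
    and nonneg: "\<forall>p\<in>orth. 0 \<le> f p"
    and pos: "\<forall>p\<in>orth - {0}. 0 < f p"
    and homog: "\<forall>p\<in>orth. \<forall>t>0. f (t *\<^sub>R p) = t * f p"
    and smooth: "\<exists>U F. open U \<and> orth - {0} \<subseteq> U \<and> smooth_on U F \<and>
                   (\<forall>x\<in>orth - {0}. F x = f x) \<and>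
                   (\<forall>p\<in>levelN f. \<forall>v. v \<noteq> 0 \<and> gradF F p \<bullet> v = 0 \<longrightarrow> 0 < v \<bullet> hessF F p v)"
    and regular: "\<forall>p\<in>levelN f. \<exists>g. is_grad f p g \<and> g \<noteq> 0"
    and normal_nonneg: "\<forall>p\<in>levelN f. \<forall>g. is_grad f p g \<longrightarrow> g /\<^sub>R norm g \<in> orth"
    and convex: "convex {p\<in>orth. f p \<le> 1}"
    and hb: "0 < hb"
  shows "(\<forall>m::nat^'n. Em f hb m = ereal (f (hb *\<^sub>R nvec m))) \<and>
         (\<forall>m::nat^'n. Em f hb m =
            (SUP k\<in>Nset f 0 - {0}. ereal (hb * (nvec m \<bullet> ivec k) / act f k))) \<and>
         (\<forall>m::nat^'n. \<forall>e'::real.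
            (\<forall>e::real.
               (e > e' \<longrightarrow> (SUP l\<in>{1::nat..}. INF k\<in>Nset f (int l).
                               ereal (e * act f k - hb * (nvec m \<bullet> ivec k))) = \<infinity>) \<and>
               (e < e' \<longrightarrow> (SUP l\<in>{1::nat..}. INF k\<in>Nset f (int l).
                               ereal (e * act f k - hb * (nvec m \<bullet> ivec k))) = -\<infinity>))
            \<longleftrightarrow> ereal e' = Em f hb m)"
proof -
  interpret toric f
    using cont nonneg pos homog smooth regular normal_nonneg convex by unfold_locales
  have y: "hb *\<^sub>R nvec m \<in> orth" for m :: "nat^'n"
    using hb by (intro orth_scaleR nvec_in_orth) simp
  have scale: "hb * (nvec m \<bullet> ivec k) = (hb *\<^sub>R nvec m) \<bullet> ivec k" for m :: "nat^'n" and k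
    by simp
  have Em: "Em f hb m = ereal (f (hb *\<^sub>R nvec m))" for m
    unfolding Em_def scale by (rule SUP_action_ratio[OF y])
  show ?thesis
  proof (intro conjI allI)
    fix m :: "nat^'n"
    show "Em f hb m = ereal (f (hb *\<^sub>R nvec m))" by (rule Em)
    show "Em f hb m = (SUP k\<in>Nset f 0 - {0}. ereal (hb * (nvec m \<bullet> ivec k) / act f k))"
      unfolding Em_def action_spectrum_eq_image by (simp add: image_image)
    fix e' :: real
    show "(\<forall>e::real.
            (e > e' \<longrightarrow> (SUP l\<in>{1::nat..}. INF k\<in>Nset f (int l).
                            ereal (e * act f k - hb * (nvec m \<bullet> ivec k))) = \<infinity>) \<and>
            (e < e' \<longrightarrow> (SUP l\<in>{1::nat..}. INF k\<in>Nset f (int l).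
                            ereal (e * act f k - hb * (nvec m \<bullet> ivec k))) = -\<infinity>))
          \<longleftrightarrow> ereal e' = Em f hb m"
      unfolding scale Em ereal.inject
      by (rule threshold_unique[OF SUP_INF_above[OF y] SUP_INF_below[OF y]])
  qed
qed

end
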